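(* For every $i\ge1$, in $\mathcal W_m(q,\mu)$ with $m\ge 2i+1$: $$c^{(2i)}\,\sigma_{2i}\,c^{(2i)}=\eta^{-1}\mu^{-1}c^{(2i)},\qquad c^{(2i)}\,\kappa_{2i}\,c^{(2i)}=\eta^{-1}c^{(2i)}.$$
   Context: Fix $q\in\mathbb C\setminus\{0,\pm1\}$, $\mu\in\mathbb C\setminus\{0,q,-q^{-1}\}$. Braid group $\mathcal B_n$: generators $\sigma_1,\dots,\sigma_{n-1}$, relations $\sigma_i\sigma_{i+1}\sigma_i=\sigma_{i+1}\sigma_i\sigma_{i+1}$, $\sigma_i\sigma_j=\sigma_j\sigma_i$ ($|i-j|>1$). With $\kappa_i:=\frac{(q-\sigma_i)(q^{-1}+\sigma_i)}{\mu(q-q^{-1})}$, the BMW algebra $\mathcal W_n(q,\mu)$ is $\mathbb C\mathcal B_n$ modulo $\sigma_i\kappa_i=\kappa_i\sigma_i=\mu\kappa_i$, $\kappa_i\sigma_{i+1}^{\epsilon}\kappa_i=\mu^{-\epsilon}\kappa_i$ ($\epsilon=\pm1$). $\eta:=\frac{(q-\mu)(q^{-1}+\mu)}{\mu(q-q^{-1})}$. Elements of $\mathcal W_n$ are viewed in $\mathcal W_m$, $m>n$, via $\sigma_i\mapsto\sigma_i$; for $\alpha\in\mathcal W_n$, $\alpha^{\uparrow k}\in\mathcal W_{n+k}$ is its image under $\sigma_i\mapsto\sigma_{i+k}$. Contractors: $c^{(2)}:=\eta^{-1}\kappa_1$, $c^{(2i+2)}:=c^{(2i)\uparrow1}\kappa_1\kappa_{2i+1}c^{(2i)\uparrow1}$.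 *)

theory Defs
  imports Complex_Main
begin

text \<open>Terms of the free unital associative complex algebra on generators
  sigma_j and sigma_j^-1 (j a natural number).\<close>
datatype bexpr = Sg nat | SgInv nat | Sc complex | Pl bexpr bexpr | Tm bexpr bexpr

fun bshift :: "nat \<Rightarrow> bexpr \<Rightarrow> bexpr" where
  "bshift k (Sg j) = Sg (j + k)"
| "bshift k (SgInv j) = SgInv (j + k)"
| "bshift k (Sc c) = Sc c"
| "bshift k (Pl x y) = Pl (bshift k x) (bshift k y)"
| "bshift k (Tm x y) = Tm (bshift k x) (bshift k y)"

definition bkappa :: "complex \<Rightarrow> complex \<Rightarrow> nat \<Rightarrow> bexpr" where
  "bkappa q \<mu> j = Tm (Sc (1 / (\<mu> * (q - 1/q))))
      (Tm (Pl (Sc q) (Tm (Sc (-1)) (Sg j))) (Pl (Sc (1/q)) (Sg j)))"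

definition beta :: "complex \<Rightarrow> complex \<Rightarrow> complex" where
  "beta q \<mu> = (q - \<mu>) * (1/q + \<mu>) / (\<mu> * (q - 1/q))"

text \<open>Contractors: bcontr q mu i = c^{(2i)} for i \<ge> 1 (value at i = 0 is irrelevant).\<close>
fun bcontr :: "complex \<Rightarrow> complex \<Rightarrow> nat \<Rightarrow> bexpr" where
  "bcontr q \<mu> 0 = Sc 1"
| "bcontr q \<mu> (Suc 0) = Tm (Sc (1 / beta q \<mu>)) (bkappa q \<mu> 1)"
| "bcontr q \<mu> (Suc (Suc n)) =
     Tm (Tm (Tm (bshift 1 (bcontr q \<mu> (Suc n))) (bkappa q \<mu> 1))
            (bkappa q \<mu> (2 * Suc n + 1)))
        (bshift 1 (bcontr q \<mu> (Suc n)))"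

text \<open>Equality in the BMW algebra W_m(q,mu): the smallest congruence of complex
  algebras on terms containing the defining relations of C B_m and of W_m.\<close>
inductive bmw_eq :: "complex \<Rightarrow> complex \<Rightarrow> nat \<Rightarrow> bexpr \<Rightarrow> bexpr \<Rightarrow> bool"
  for q \<mu> :: complex and m :: nat where
  refl: "bmw_eq q \<mu> m x x"
| sym: "bmw_eq q \<mu> m x y \<Longrightarrow> bmw_eq q \<mu> m y x"
| trans: "bmw_eq q \<mu> m x y \<Longrightarrow> bmw_eq q \<mu> m y z \<Longrightarrow> bmw_eq q \<mu> m x z"
| cong_Pl: "bmw_eq q \<mu> m x x' \<Longrightarrow> bmw_eq q \<mu> m y y' \<Longrightarrow> bmw_eq q \<mu> m (Pl x y) (Pl x' y')"
| cong_Tm: "bmw_eq q \<mu> m x x' \<Longrightarrow> bmw_eq q \<mu> m y y' \<Longrightarrow> bmw_eq q \<mu> m (Tm x y) (Tm x' y')"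
| pl_assoc: "bmw_eq q \<mu> m (Pl (Pl x y) z) (Pl x (Pl y z))"
| pl_comm: "bmw_eq q \<mu> m (Pl x y) (Pl y x)"
| pl_zero: "bmw_eq q \<mu> m (Pl x (Sc 0)) x"
| pl_neg: "bmw_eq q \<mu> m (Pl x (Tm (Sc (-1)) x)) (Sc 0)"
| tm_assoc: "bmw_eq q \<mu> m (Tm (Tm x y) z) (Tm x (Tm y z))"
| tm_one_l: "bmw_eq q \<mu> m (Tm (Sc 1) x) x"
| tm_one_r: "bmw_eq q \<mu> m (Tm x (Sc 1)) x"
| distr_l: "bmw_eq q \<mu> m (Tm x (Pl y z)) (Pl (Tm x y) (Tm x z))"
| distr_r: "bmw_eq q \<mu> m (Tm (Pl x y) z) (Pl (Tm x z) (Tm y z))"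
| sc_add: "bmw_eq q \<mu> m (Pl (Sc a) (Sc b)) (Sc (a + b))"
| sc_mult: "bmw_eq q \<mu> m (Tm (Sc a) (Sc b)) (Sc (a * b))"
| sc_central: "bmw_eq q \<mu> m (Tm (Sc a) x) (Tm x (Sc a))"
| inv_r: "1 \<le> j \<Longrightarrow> j < m \<Longrightarrow> bmw_eq q \<mu> m (Tm (Sg j) (SgInv j)) (Sc 1)"
| inv_l: "1 \<le> j \<Longrightarrow> j < m \<Longrightarrow> bmw_eq q \<mu> m (Tm (SgInv j) (Sg j)) (Sc 1)"
| braid: "1 \<le> j \<Longrightarrow> j + 1 < m \<Longrightarrow>
     bmw_eq q \<mu> m (Tm (Tm (Sg j) (Sg (j+1))) (Sg j)) (Tm (Tm (Sg (j+1)) (Sg j)) (Sg (j+1)))"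
| far: "1 \<le> i \<Longrightarrow> i < m \<Longrightarrow> 1 \<le> j \<Longrightarrow> j < m \<Longrightarrow> i + 1 < j \<Longrightarrow>
     bmw_eq q \<mu> m (Tm (Sg i) (Sg j)) (Tm (Sg j) (Sg i))"
| sk: "1 \<le> j \<Longrightarrow> j < m \<Longrightarrow>
     bmw_eq q \<mu> m (Tm (Sg j) (bkappa q \<mu> j)) (Tm (Sc \<mu>) (bkappa q \<mu> j))"
| ks: "1 \<le> j \<Longrightarrow> j < m \<Longrightarrow>
     bmw_eq q \<mu> m (Tm (bkappa q \<mu> j) (Sg j)) (Tm (Sc \<mu>) (bkappa q \<mu> j))"
| ksk_pos: "1 \<le> j \<Longrightarrow> j + 1 < m \<Longrightarrow>
     bmw_eq q \<mu> m (Tm (Tm (bkappa q \<mu> j) (Sg (j+1))) (bkappa q \<mu> j)) (Tm (Sc (1/\<mu>)) (bkappa q \<mu> j))"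
| ksk_neg: "1 \<le> j \<Longrightarrow> j + 1 < m \<Longrightarrow>
     bmw_eq q \<mu> m (Tm (Tm (bkappa q \<mu> j) (SgInv (j+1))) (bkappa q \<mu> j)) (Tm (Sc \<mu>) (bkappa q \<mu> j))"

end

theory Submission
  imports Defs
begin

text \<open>For \<open>y\<close> on strand \<open>j + 1\<close> the sandwiches \<open>\<kappa>\<^sub>j y \<kappa>\<^sub>j\<close> with \<open>y = 1, \<sigma>\<^sub>j\<^sub>+\<^sub>1, \<kappa>\<^sub>j\<^sub>+\<^sub>1\<close> are
  \<open>\<beta>, \<mu>\<^sup>-\<^sup>1, 1\<close> times \<open>\<kappa>\<^sub>j\<close>. Induction along \<open>c\<^sup>(\<^sup>2\<^sup>i\<^sup>+\<^sup>2\<^sup>) = X \<kappa>\<^sub>1 \<kappa>\<^sub>2\<^sub>i\<^sub>+\<^sub>1 X\<close>,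
  \<open>X = c\<^sup>(\<^sup>2\<^sup>i\<^sup>)\<^sup>\<up>\<^sup>1\<close>, shows that the contractor behaves like \<open>\<beta>\<^sup>-\<^sup>1\<kappa>\<^sub>2\<^sub>i\<^sub>-\<^sub>1\<close>: if
  \<open>\<kappa>\<^sub>2\<^sub>i\<^sub>-\<^sub>1 y \<kappa>\<^sub>2\<^sub>i\<^sub>-\<^sub>1 = a \<kappa>\<^sub>2\<^sub>i\<^sub>-\<^sub>1\<close> for \<open>y\<close> on strand \<open>2i\<close>, then \<open>c y c = (a/\<beta>) c\<close>.
  In the step, \<open>y\<close> commutes with \<open>X\<close>, \<open>X\<close> is idempotent (the case \<open>y = 1\<close> one level down), and
  \<open>\<kappa>\<^sub>1 X \<kappa>\<^sub>1 = \<beta>\<^sup>-\<^sup>1 \<kappa>\<^sub>1 Z\<close> for the next smaller contractor \<open>Z\<close>, by \<open>\<kappa>\<^sub>1 \<kappa>\<^sub>2 \<kappa>\<^sub>1 = \<kappa>\<^sub>1\<close> and the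
  induction hypothesis for \<open>Z\<close>. The theorem is the case \<open>y = \<sigma>\<^sub>2\<^sub>i, \<kappa>\<^sub>2\<^sub>i\<close>.\<close>

lemma bshift_bshift [simp]: "bshift a (bshift b x) = bshift (b + a) x"
  by (induction x) (auto simp: algebra_simps)

lemma bshift_0 [simp]: "bshift 0 x = x"
  by (induction x) auto

lemma bshift_bkappa [simp]: "bshift k (bkappa q \<mu> j) = bkappa q \<mu> (j + k)"
  by (simp add: bkappa_def)

lemma q_minus_inverse_nonzero:
  fixes q :: complex
  assumes "q \<noteq> 0" "q \<noteq> 1" "q \<noteq> -1"
  shows "q - 1/q \<noteq> 0"
proof
  assume "q - 1/q = 0"
  then have "(q - 1) * (q + 1) = 0" using assms(1) by (simp add: field_simps)
  then show False using assms(2,3) by (auto simp: add_eq_0_iff minus_equation_iff)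
qed

lemma beta_nonzero:
  assumes "q \<noteq> 0" "q \<noteq> 1" "q \<noteq> -1" "\<mu> \<noteq> 0" "\<mu> \<noteq> q" "\<mu> \<noteq> - (1/q)"
  shows "beta q \<mu> \<noteq> 0"
  using assms q_minus_inverse_nonzero[of q] by (auto simp: beta_def add_eq_0_iff)

lemma beta_identity:
  fixes q \<mu> :: complex
  assumes "q \<noteq> 0" "q \<noteq> 1" "q \<noteq> -1" "\<mu> \<noteq> 0"
  shows "(q - 1/q) * beta q \<mu> = 1/\<mu> + (q - 1/q) - \<mu>"
  using assms q_minus_inverse_nonzero[of q] by (simp add: beta_def field_simps)

definition sandwich :: "bexpr \<Rightarrow> bexpr \<Rightarrow> bexpr" where
  "sandwich c y = Tm (Tm c y) c"

definition prodl :: "bexpr list \<Rightarrow> bexpr" where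
  "prodl xs = foldr Tm xs (Sc 1)"

lemma prodl_simps [simp]: "prodl [] = Sc 1" "prodl (x # xs) = Tm x (prodl xs)"
  by (simp_all add: prodl_def)

fun supported_in :: "nat set \<Rightarrow> bexpr \<Rightarrow> bool" where
  "supported_in A (Sg j) = (j \<in> A)"
| "supported_in A (SgInv j) = False"
| "supported_in A (Sc c) = True"
| "supported_in A (Pl x y) = (supported_in A x \<and> supported_in A y)"
| "supported_in A (Tm x y) = (supported_in A x \<and> supported_in A y)"

lemma supported_in_mono: "supported_in A x \<Longrightarrow> A \<subseteq> B \<Longrightarrow> supported_in B x"
  by (induction x) auto

lemma supported_in_bshift: "supported_in {a..<b} x \<Longrightarrow> supported_in {a+k..<b+k} (bshift k x)"
  by (induction x) auto

lemma supported_in_bkappa [simp]: "supported_in A (bkappa q \<mu> j) = (j \<in> A)"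
  by (simp add: bkappa_def)

lemma supported_in_bcontr: "supported_in {1..<2*i} (bcontr q \<mu> i)"
proof (induction q \<mu> i rule: bcontr.induct)
  case (3 q \<mu> n)
  have "supported_in {2..<2 * Suc (Suc n)} (bshift 1 (bcontr q \<mu> (Suc n)))"
    by (rule supported_in_mono[OF supported_in_bshift[OF "3.IH"(1), of 1]]) auto
  then show ?case by (auto intro: supported_in_mono)
qed auto

lemma supported_in_shifted_bcontr: "supported_in {k+1..<2*i+k} (bshift k (bcontr q \<mu> i))"
  using supported_in_bshift[OF supported_in_bcontr[of i q \<mu>], where k=k] by (simp add: add.commute)

definition far_apart :: "nat \<Rightarrow> nat set \<Rightarrow> nat set \<Rightarrow> bool" where
  "far_apart m A B \<longleftrightarrow> (\<forall>i\<in>A. \<forall>j\<in>B. 1 \<le> i \<and> i < m \<and> 1 \<le> j \<and> j < m \<and> (i + 1 < j \<or> j + 1 < i))"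

context
  fixes q \<mu> :: complex and m :: nat
begin

abbreviation bmw_equiv (infix "\<approx>" 50) where
  "x \<approx> y \<equiv> bmw_eq q \<mu> m x y"

declare bmw_eq.trans [trans]

lemma cong_Tm_left: "x \<approx> x' \<Longrightarrow> Tm x y \<approx> Tm x' y"
  by (rule bmw_eq.cong_Tm, assumption, rule bmw_eq.refl)

lemma cong_Tm_right: "y \<approx> y' \<Longrightarrow> Tm x y \<approx> Tm x y'"
  by (rule bmw_eq.cong_Tm, rule bmw_eq.refl, assumption)

lemma tm_assoc': "Tm x (Tm y z) \<approx> Tm (Tm x y) z"
  by (rule bmw_eq.sym, rule bmw_eq.tm_assoc)

lemma Sc_cong: "a = b \<Longrightarrow> Tm (Sc a) x \<approx> Tm (Sc b) x"
  by (simp add: bmw_eq.refl)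

lemma Tm_Sc_right: "Tm x (Sc a) \<approx> Tm (Sc a) x"
  by (rule bmw_eq.sym, rule bmw_eq.sc_central)

lemma Tm_Sc_Tm_Sc: "Tm (Sc a) (Tm (Sc b) x) \<approx> Tm (Sc (a * b)) x"
proof -
  have "Tm (Sc a) (Tm (Sc b) x) \<approx> Tm (Tm (Sc a) (Sc b)) x" by (rule tm_assoc')
  also have "\<dots> \<approx> Tm (Sc (a * b)) x" by (rule cong_Tm_left, rule bmw_eq.sc_mult)
  finally show ?thesis .
qed

lemma Tm_Tm_Sc: "Tm x (Tm (Sc a) y) \<approx> Tm (Sc a) (Tm x y)"
proof -
  have "Tm x (Tm (Sc a) y) \<approx> Tm (Tm x (Sc a)) y" by (rule tm_assoc')
  also have "\<dots> \<approx> Tm (Tm (Sc a) x) y" by (rule cong_Tm_left, rule Tm_Sc_right)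
  also have "\<dots> \<approx> Tm (Sc a) (Tm x y)" by (rule bmw_eq.tm_assoc)
  finally show ?thesis .
qed

lemma Pl_Tm_Sc: "Pl (Tm (Sc a) x) (Tm (Sc b) x) \<approx> Tm (Sc (a + b)) x"
proof -
  have "Pl (Tm (Sc a) x) (Tm (Sc b) x) \<approx> Tm (Pl (Sc a) (Sc b)) x"
    by (rule bmw_eq.sym, rule bmw_eq.distr_r)
  also have "\<dots> \<approx> Tm (Sc (a + b)) x" by (rule cong_Tm_left, rule bmw_eq.sc_add)
  finally show ?thesis .
qed

lemma Tm_Pl_eigen:
  "Tm x y \<approx> Tm (Sc a) w \<Longrightarrow> Tm x z \<approx> Tm (Sc b) w \<Longrightarrow> Tm x (Pl y z) \<approx> Tm (Sc (a + b)) w"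
  by (rule bmw_eq.trans[OF bmw_eq.distr_l], rule bmw_eq.trans[OF bmw_eq.cong_Pl Pl_Tm_Sc])

lemma Pl_Tm_eigen:
  "Tm y x \<approx> Tm (Sc a) w \<Longrightarrow> Tm z x \<approx> Tm (Sc b) w \<Longrightarrow> Tm (Pl y z) x \<approx> Tm (Sc (a + b)) w"
  by (rule bmw_eq.trans[OF bmw_eq.distr_r], rule bmw_eq.trans[OF bmw_eq.cong_Pl Pl_Tm_Sc])

lemma right_eigen_affine:
  assumes "Tm x s \<approx> Tm (Sc c) x"
  shows "Tm x (Pl (Sc a) (Tm (Sc b) s)) \<approx> Tm (Sc (a + b * c)) x"
proof (rule Tm_Pl_eigen)
  show "Tm x (Sc a) \<approx> Tm (Sc a) x" by (rule Tm_Sc_right)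
  have "Tm x (Tm (Sc b) s) \<approx> Tm (Sc b) (Tm x s)" by (rule Tm_Tm_Sc)
  also have "\<dots> \<approx> Tm (Sc b) (Tm (Sc c) x)" by (rule cong_Tm_right, rule assms)
  also have "\<dots> \<approx> Tm (Sc (b * c)) x" by (rule Tm_Sc_Tm_Sc)
  finally show "Tm x (Tm (Sc b) s) \<approx> Tm (Sc (b * c)) x" .
qed

lemma right_eigen_translate:
  "Tm x s \<approx> Tm (Sc c) x \<Longrightarrow> Tm x (Pl (Sc a) s) \<approx> Tm (Sc (a + c)) x"
  by (rule Tm_Pl_eigen[OF Tm_Sc_right])

lemma kappa_square:
  assumes "1 \<le> j" "j < m"
  shows "Tm (bkappa q \<mu> j) (bkappa q \<mu> j) \<approx> Tm (Sc (beta q \<mu>)) (bkappa q \<mu> j)"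
proof -
  let ?k = "bkappa q \<mu> j" and ?c = "1 / (\<mu> * (q - 1/q))"
  let ?A = "Pl (Sc q) (Tm (Sc (-1)) (Sg j))" and ?B = "Pl (Sc (1/q)) (Sg j)"
  have ev: "Tm ?k (Sg j) \<approx> Tm (Sc \<mu>) ?k" by (rule bmw_eq.ks[OF assms])
  have "Tm ?k ?k = Tm ?k (Tm (Sc ?c) (Tm ?A ?B))" by (simp add: bkappa_def)
  also have "\<dots> \<approx> Tm (Sc ?c) (Tm (Tm ?k ?A) ?B)" by (rule bmw_eq.trans[OF Tm_Tm_Sc cong_Tm_right[OF tm_assoc']])
  also have "\<dots> \<approx> Tm (Sc ?c) (Tm (Tm (Sc (q + -1 * \<mu>)) ?k) ?B)"
    by (rule cong_Tm_right, rule cong_Tm_left, rule right_eigen_affine[OF ev])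
  also have "\<dots> \<approx> Tm (Sc ?c) (Tm (Sc (q + -1 * \<mu>)) (Tm (Sc (1/q + \<mu>)) ?k))"
    by (rule cong_Tm_right, rule bmw_eq.trans[OF bmw_eq.tm_assoc cong_Tm_right[OF right_eigen_translate[OF ev]]])
  also have "\<dots> \<approx> Tm (Sc (?c * ((q + -1 * \<mu>) * (1/q + \<mu>)))) ?k"
    by (rule bmw_eq.trans[OF cong_Tm_right[OF Tm_Sc_Tm_Sc] Tm_Sc_Tm_Sc])
  also have "\<dots> \<approx> Tm (Sc (beta q \<mu>)) ?k" by (rule Sc_cong) (simp add: beta_def)
  finally show ?thesis .
qed

lemma kappa_eq_scaled_kappa_SgInv:
  assumes "1 \<le> j" "j < m"
  shows "Tm (Sc \<mu>) (Tm (bkappa q \<mu> j) (SgInv j)) \<approx> bkappa q \<mu> j"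
proof -
  let ?k = "bkappa q \<mu> j"
  have "Tm (Sc \<mu>) (Tm ?k (SgInv j)) \<approx> Tm (Tm (Sc \<mu>) ?k) (SgInv j)" by (rule tm_assoc')
  also have "\<dots> \<approx> Tm (Tm ?k (Sg j)) (SgInv j)"
    by (rule cong_Tm_left, rule bmw_eq.sym, rule bmw_eq.ks[OF assms])
  also have "\<dots> \<approx> Tm ?k (Tm (Sg j) (SgInv j))" by (rule bmw_eq.tm_assoc)
  also have "\<dots> \<approx> Tm ?k (Sc 1)" by (rule cong_Tm_right, rule bmw_eq.inv_r[OF assms])
  also have "\<dots> \<approx> ?k" by (rule bmw_eq.tm_one_r)
  finally show ?thesis .
qed

lemma sandwich_cong: "y \<approx> y' \<Longrightarrow> sandwich c y \<approx> sandwich c y'"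
  unfolding sandwich_def by (rule cong_Tm_left, rule cong_Tm_right)

lemma sandwich_Tm_Sc: "sandwich c (Tm (Sc a) y) \<approx> Tm (Sc a) (sandwich c y)"
  unfolding sandwich_def by (rule bmw_eq.trans[OF cong_Tm_left[OF Tm_Tm_Sc]], rule bmw_eq.tm_assoc)

lemma sandwich_Tm_Sc_eigen:
  "sandwich c y \<approx> Tm (Sc a) c \<Longrightarrow> sandwich c (Tm (Sc b) y) \<approx> Tm (Sc (b * a)) c"
  by (rule bmw_eq.trans[OF sandwich_Tm_Sc], rule bmw_eq.trans[OF cong_Tm_right Tm_Sc_Tm_Sc])

lemma sandwich_Pl_eigen:
  "sandwich c y \<approx> Tm (Sc a) c \<Longrightarrow> sandwich c z \<approx> Tm (Sc b) c \<Longrightarrow> sandwich c (Pl y z) \<approx> Tm (Sc (a + b)) c"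
  unfolding sandwich_def by (rule bmw_eq.trans[OF cong_Tm_left[OF bmw_eq.distr_l]], rule Pl_Tm_eigen)

lemma sandwich_Sc_eigen:
  "Tm c c \<approx> Tm (Sc e) c \<Longrightarrow> sandwich c (Sc a) \<approx> Tm (Sc (a * e)) c"
  unfolding sandwich_def
  by (rule bmw_eq.trans[OF cong_Tm_left[OF Tm_Sc_right]], rule bmw_eq.trans[OF bmw_eq.tm_assoc],
      rule bmw_eq.trans[OF cong_Tm_right Tm_Sc_Tm_Sc])

text \<open>Multiplying the two factors of \<open>\<kappa>\<^sub>i\<close> by \<open>\<sigma>\<^sub>i\<^sup>-\<^sup>1\<close> turns \<open>\<sigma>\<^sub>i\<^sup>2\<close> into \<open>\<sigma>\<^sub>i\<close>, so that
  \<open>\<kappa>\<^sub>i \<sigma>\<^sub>i\<^sup>-\<^sup>1\<close> is a combination of \<open>1, \<sigma>\<^sub>i, \<sigma>\<^sub>i\<^sup>-\<^sup>1\<close> only.\<close>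
lemma kappa_SgInv_factor:
  assumes "1 \<le> i" "i < m"
  shows "Tm (bkappa q \<mu> i) (SgInv i) \<approx> Tm (Sc (1 / (\<mu> * (q - 1/q))))
           (Tm (Pl (Sc q) (Tm (Sc (-1)) (Sg i))) (Pl (Tm (Sc (1/q)) (SgInv i)) (Sc 1)))"
proof -
  let ?A = "Pl (Sc q) (Tm (Sc (-1)) (Sg i))" and ?B = "Pl (Sc (1/q)) (Sg i)"
  have "Tm ?B (SgInv i) \<approx> Pl (Tm (Sc (1/q)) (SgInv i)) (Tm (Sg i) (SgInv i))"
    by (rule bmw_eq.distr_r)
  also have "\<dots> \<approx> Pl (Tm (Sc (1/q)) (SgInv i)) (Sc 1)"
    by (rule bmw_eq.cong_Pl, rule bmw_eq.refl, rule bmw_eq.inv_r[OF assms])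
  finally have B: "Tm ?B (SgInv i) \<approx> Pl (Tm (Sc (1/q)) (SgInv i)) (Sc 1)" .
  have "Tm (bkappa q \<mu> i) (SgInv i) = Tm (Tm (Sc (1 / (\<mu> * (q - 1/q)))) (Tm ?A ?B)) (SgInv i)"
    by (simp add: bkappa_def)
  also have "\<dots> \<approx> Tm (Sc (1 / (\<mu> * (q - 1/q)))) (Tm ?A (Tm ?B (SgInv i)))"
    by (rule bmw_eq.trans[OF bmw_eq.tm_assoc cong_Tm_right[OF bmw_eq.tm_assoc]])
  also have "\<dots> \<approx> Tm (Sc (1 / (\<mu> * (q - 1/q)))) (Tm ?A (Pl (Tm (Sc (1/q)) (SgInv i)) (Sc 1)))"
    by (rule cong_Tm_right, rule cong_Tm_right, rule B)
  finally show ?thesis .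
qed

lemma sandwich_kappa_factor:
  assumes q: "q \<noteq> 0" "q \<noteq> 1" "q \<noteq> -1" and "\<mu> \<noteq> 0" and j: "1 \<le> j" "j + 1 < m"
  shows "sandwich (bkappa q \<mu> j)
           (Tm (Pl (Sc q) (Tm (Sc (-1)) (Sg (j+1)))) (Pl (Tm (Sc (1/q)) (SgInv (j+1))) (Sc 1)))
         \<approx> Tm (Sc (q - 1/q)) (bkappa q \<mu> j)"
proof -
  let ?k = "bkappa q \<mu> j" and ?s = "Sg (j+1)" and ?t = "SgInv (j+1)" and ?e = "beta q \<mu>"
  let ?W = "Pl (Tm (Sc (1/q)) ?t) (Sc 1)"
  have inv: "Tm ?s ?t \<approx> Sc 1" by (rule bmw_eq.inv_r) (use j in simp_all)
  have kk: "Tm ?k ?k \<approx> Tm (Sc ?e) ?k" by (rule kappa_square) (use j in simp_all)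
  have sw_s: "sandwich ?k ?s \<approx> Tm (Sc (1/\<mu>)) ?k"
    unfolding sandwich_def by (rule bmw_eq.ksk_pos[OF j])
  have sw_t: "sandwich ?k ?t \<approx> Tm (Sc \<mu>) ?k"
    unfolding sandwich_def by (rule bmw_eq.ksk_neg[OF j])
  have sw_1: "sandwich ?k (Sc a) \<approx> Tm (Sc (a * ?e)) ?k" for a
    by (rule sandwich_Sc_eigen[OF kk])
  have sW: "Tm ?s ?W \<approx> Pl (Tm (Sc (1/q)) (Sc 1)) ?s"
  proof -
    have "Tm ?s ?W \<approx> Pl (Tm ?s (Tm (Sc (1/q)) ?t)) (Tm ?s (Sc 1))" by (rule bmw_eq.distr_l)
    also have "\<dots> \<approx> Pl (Tm (Sc (1/q)) (Sc 1)) ?s"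
      by (rule bmw_eq.cong_Pl, rule bmw_eq.trans[OF Tm_Tm_Sc cong_Tm_right[OF inv]],
          rule bmw_eq.tm_one_r)
    finally show ?thesis .
  qed
  have sw_W: "sandwich ?k ?W \<approx> Tm (Sc ((1/q) * \<mu> + 1 * ?e)) ?k"
    by (rule sandwich_Pl_eigen[OF sandwich_Tm_Sc_eigen[OF sw_t] sw_1])
  have sw_sW: "sandwich ?k (Tm ?s ?W) \<approx> Tm (Sc ((1/q) * (1 * ?e) + 1/\<mu>)) ?k"
    by (rule bmw_eq.trans[OF sandwich_cong[OF sW]],
        rule sandwich_Pl_eigen[OF sandwich_Tm_Sc_eigen[OF sw_1] sw_s])
  have "sandwich ?k (Tm (Pl (Sc q) (Tm (Sc (-1)) ?s)) ?W)
          \<approx> sandwich ?k (Pl (Tm (Sc q) ?W) (Tm (Sc (-1)) (Tm ?s ?W)))"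
    by (rule sandwich_cong, rule bmw_eq.trans[OF bmw_eq.distr_r],
        rule bmw_eq.cong_Pl, rule bmw_eq.refl, rule bmw_eq.tm_assoc)
  also have "\<dots> \<approx> Tm (Sc (q * ((1/q) * \<mu> + 1 * ?e) + (-1) * ((1/q) * (1 * ?e) + 1/\<mu>))) ?k"
    by (rule sandwich_Pl_eigen[OF sandwich_Tm_Sc_eigen[OF sw_W] sandwich_Tm_Sc_eigen[OF sw_sW]])
  also have "\<dots> \<approx> Tm (Sc (q - 1/q)) ?k"
  proof (rule Sc_cong)
    have "q * ((1/q) * \<mu> + 1 * ?e) + (-1) * ((1/q) * (1 * ?e) + 1/\<mu>) = \<mu> - 1/\<mu> + (q - 1/q) * ?e"
      using q(1) by (simp add: algebra_simps)
    then show "q * ((1/q) * \<mu> + 1 * ?e) + (-1) * ((1/q) * (1 * ?e) + 1/\<mu>) = q - 1/q"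
      using beta_identity[OF q \<open>\<mu> \<noteq> 0\<close>] by simp
  qed
  finally show ?thesis .
qed

lemma kappa_kappa_kappa:
  assumes q: "q \<noteq> 0" "q \<noteq> 1" "q \<noteq> -1" and "\<mu> \<noteq> 0" and j: "1 \<le> j" "j + 1 < m"
  shows "sandwich (bkappa q \<mu> j) (bkappa q \<mu> (j+1)) \<approx> bkappa q \<mu> j"
proof -
  let ?k = "bkappa q \<mu> j" and ?c = "1 / (\<mu> * (q - 1/q))"
  let ?AW = "Tm (Pl (Sc q) (Tm (Sc (-1)) (Sg (j+1)))) (Pl (Tm (Sc (1/q)) (SgInv (j+1))) (Sc 1))"
  have "sandwich ?k (bkappa q \<mu> (j+1)) \<approx> sandwich ?k (Tm (Sc \<mu>) (Tm (Sc ?c) ?AW))"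
  proof (rule sandwich_cong)
    have "Tm (Sc \<mu>) (Tm (Sc ?c) ?AW) \<approx> Tm (Sc \<mu>) (Tm (bkappa q \<mu> (j+1)) (SgInv (j+1)))"
      by (rule cong_Tm_right, rule bmw_eq.sym, rule kappa_SgInv_factor) (use j in simp_all)
    also have "\<dots> \<approx> bkappa q \<mu> (j+1)" by (rule kappa_eq_scaled_kappa_SgInv) (use j in simp_all)
    finally show "bkappa q \<mu> (j+1) \<approx> Tm (Sc \<mu>) (Tm (Sc ?c) ?AW)" by (rule bmw_eq.sym)
  qed
  also have "\<dots> \<approx> Tm (Sc (\<mu> * (?c * (q - 1/q)))) ?k"
    by (rule sandwich_Tm_Sc_eigen, rule sandwich_Tm_Sc_eigen, rule sandwich_kappa_factor[OF q \<open>\<mu> \<noteq> 0\<close> j])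
  also have "\<dots> \<approx> ?k"
    using q_minus_inverse_nonzero[OF q] \<open>\<mu> \<noteq> 0\<close> by (simp add: bmw_eq.tm_one_l)
  finally show ?thesis .
qed

lemma prodl_append: "prodl (xs @ ys) \<approx> Tm (prodl xs) (prodl ys)"
proof (induction xs)
  case Nil
  show ?case by (simp, rule bmw_eq.sym, rule bmw_eq.tm_one_l)
next
  case (Cons x xs)
  have "prodl ((x # xs) @ ys) \<approx> Tm x (Tm (prodl xs) (prodl ys))"
    by (simp, rule cong_Tm_right, rule Cons)
  also have "\<dots> \<approx> Tm (prodl (x # xs)) (prodl ys)" by (simp, rule tm_assoc')
  finally show ?case .
qed

lemma prodl_replace:
  assumes "prodl u \<approx> prodl v" "xs = pre @ u @ post" "ys = pre @ v @ post"
  shows "prodl xs \<approx> prodl ys"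
proof -
  have "prodl xs \<approx> Tm (prodl pre) (Tm (prodl u) (prodl post))"
    unfolding assms(2) by (rule bmw_eq.trans[OF prodl_append cong_Tm_right[OF prodl_append]])
  also have "\<dots> \<approx> Tm (prodl pre) (Tm (prodl v) (prodl post))"
    by (rule cong_Tm_right, rule cong_Tm_left, rule assms(1))
  also have "\<dots> \<approx> prodl ys"
    unfolding assms(3)
    by (rule bmw_eq.sym, rule bmw_eq.trans[OF prodl_append cong_Tm_right[OF prodl_append]])
  finally show ?thesis .
qed

lemma prodl_singleton: "prodl [x] \<approx> x"
  by (simp, rule bmw_eq.tm_one_r)

lemma prodl_two: "prodl [x, y] \<approx> Tm x y"
  by (simp, rule cong_Tm_right, rule bmw_eq.tm_one_r)

lemma prodl_three: "prodl [x, y, z] \<approx> Tm (Tm x y) z"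
  by (rule bmw_eq.trans[OF _ tm_assoc'], simp, rule cong_Tm_right, rule prodl_two[simplified])

lemma prodl_four: "prodl [x, y, z, w] \<approx> Tm (Tm (Tm x y) z) w"
proof -
  have "prodl [x, y, z, w] \<approx> Tm x (Tm (Tm y z) w)"
    by (simp, rule cong_Tm_right, rule prodl_three[simplified])
  then show ?thesis by (rule bmw_eq.trans[OF _ bmw_eq.trans[OF tm_assoc' cong_Tm_left[OF tm_assoc']]])
qed

lemma prodl_merge: "Tm x y \<approx> z \<Longrightarrow> prodl [x, y] \<approx> prodl [z]"
  by (rule bmw_eq.trans[OF prodl_two], rule bmw_eq.trans[OF _ bmw_eq.sym[OF prodl_singleton]])

lemma prodl_swap:
  "Tm x y \<approx> Tm y x \<Longrightarrow> xs = pre @ [x, y] @ post \<Longrightarrow> ys = pre @ [y, x] @ post \<Longrightarrow> prodl xs \<approx> prodl ys"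
  by (rule prodl_replace, rule bmw_eq.trans[OF prodl_two], rule bmw_eq.trans[OF _ bmw_eq.sym[OF prodl_two]])

lemma prodl_Sc:
  assumes "xs = pre @ Sc c # post" "ys = pre @ post"
  shows "prodl xs \<approx> Tm (Sc c) (prodl ys)"
  unfolding assms
proof (induction pre)
  case Nil
  show ?case by (simp, rule bmw_eq.refl)
next
  case (Cons x pre)
  have "prodl ((x # pre) @ Sc c # post) \<approx> Tm x (Tm (Sc c) (prodl (pre @ post)))"
    by (simp, rule cong_Tm_right, rule Cons)
  also have "\<dots> \<approx> Tm (Sc c) (prodl ((x # pre) @ post))" by (simp, rule Tm_Tm_Sc)
  finally show ?case .
qed

lemma sandwich_prodl: "c \<approx> prodl xs \<Longrightarrow> sandwich c y \<approx> prodl (xs @ y # xs)"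
proof -
  assume c: "c \<approx> prodl xs"
  have "sandwich c y \<approx> Tm (Tm (prodl xs) (prodl [y])) (prodl xs)"
    unfolding sandwich_def
    by (rule bmw_eq.cong_Tm, rule bmw_eq.cong_Tm, rule c, rule bmw_eq.sym, rule prodl_singleton, rule c)
  also have "\<dots> \<approx> prodl ((xs @ [y]) @ xs)"
    by (rule bmw_eq.trans[OF cong_Tm_left[OF bmw_eq.sym[OF prodl_append]]], rule bmw_eq.sym, rule prodl_append)
  finally show ?thesis by simp
qed

lemma commute_Sg:
  "supported_in A x \<Longrightarrow> far_apart m A {j} \<Longrightarrow> Tm x (Sg j) \<approx> Tm (Sg j) x"
proof (induction x)
  case (Sg i)
  then have "1 \<le> i" "i < m" "1 \<le> j" "j < m" "i + 1 < j \<or> j + 1 < i"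
    by (auto simp: far_apart_def)
  then show ?case using bmw_eq.far[of i m j q \<mu>] bmw_eq.far[of j m i q \<mu>] by (auto intro: bmw_eq.sym)
next
  case (Sc c)
  show ?case by (rule bmw_eq.sc_central)
next
  case (Pl x y)
  then have "Tm x (Sg j) \<approx> Tm (Sg j) x" "Tm y (Sg j) \<approx> Tm (Sg j) y" by auto
  then have "Pl (Tm x (Sg j)) (Tm y (Sg j)) \<approx> Pl (Tm (Sg j) x) (Tm (Sg j) y)"
    by (rule bmw_eq.cong_Pl)
  then show ?case
    by (rule bmw_eq.trans[OF bmw_eq.distr_r bmw_eq.trans[OF _ bmw_eq.sym[OF bmw_eq.distr_l]]])
next
  case (Tm x y)
  then have hx: "Tm x (Sg j) \<approx> Tm (Sg j) x" and hy: "Tm y (Sg j) \<approx> Tm (Sg j) y" by auto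
  have "Tm (Tm x y) (Sg j) \<approx> Tm x (Tm (Sg j) y)"
    by (rule bmw_eq.trans[OF bmw_eq.tm_assoc cong_Tm_right[OF hy]])
  also have "\<dots> \<approx> Tm (Sg j) (Tm x y)"
    by (rule bmw_eq.trans[OF tm_assoc' bmw_eq.trans[OF cong_Tm_left[OF hx] bmw_eq.tm_assoc]])
  finally show ?case .
qed simp

lemma commute_far_apart:
  "supported_in B y \<Longrightarrow> supported_in A x \<Longrightarrow> far_apart m A B \<Longrightarrow> Tm x y \<approx> Tm y x"
proof (induction y)
  case (Sg j)
  then show ?case by (intro commute_Sg) (auto simp: far_apart_def)
next
  case (Sc c)
  show ?case by (rule Tm_Sc_right)
next
  case (Pl y z)
  then have "Pl (Tm x y) (Tm x z) \<approx> Pl (Tm y x) (Tm z x)" by (auto intro: bmw_eq.cong_Pl)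
  then show ?case
    by (rule bmw_eq.trans[OF bmw_eq.distr_l bmw_eq.trans[OF _ bmw_eq.sym[OF bmw_eq.distr_r]]])
next
  case (Tm y z)
  then have hy: "Tm x y \<approx> Tm y x" and hz: "Tm x z \<approx> Tm z x" by auto
  have "Tm x (Tm y z) \<approx> Tm y (Tm x z)"
    by (rule bmw_eq.trans[OF tm_assoc' bmw_eq.trans[OF cong_Tm_left[OF hy] bmw_eq.tm_assoc]])
  also have "\<dots> \<approx> Tm (Tm y z) x"
    by (rule bmw_eq.trans[OF cong_Tm_right[OF hz] tm_assoc'])
  finally show ?case .
qed simp

lemma sandwich_scaled:
  assumes "sandwich c y \<approx> Tm (Sc a) c"
  shows "sandwich (Tm (Sc e) c) y \<approx> Tm (Sc (e * a)) (Tm (Sc e) c)"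
proof -
  have "sandwich (Tm (Sc e) c) y \<approx> Tm (Tm (Sc e) (Tm c y)) (Tm (Sc e) c)"
    unfolding sandwich_def by (rule cong_Tm_left, rule bmw_eq.tm_assoc)
  also have "\<dots> \<approx> Tm (Sc e) (Tm (Sc e) (sandwich c y))"
    unfolding sandwich_def by (rule bmw_eq.trans[OF bmw_eq.tm_assoc cong_Tm_right[OF Tm_Tm_Sc]])
  also have "\<dots> \<approx> Tm (Sc e) (Tm (Sc e) (Tm (Sc a) c))"
    by (rule cong_Tm_right, rule cong_Tm_right, rule assms)
  also have "\<dots> \<approx> Tm (Sc (e * (e * a))) c"
    by (rule bmw_eq.trans[OF cong_Tm_right[OF Tm_Sc_Tm_Sc] Tm_Sc_Tm_Sc])
  also have "\<dots> \<approx> Tm (Sc (e * a)) (Tm (Sc e) c)"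
    by (rule bmw_eq.sym, rule bmw_eq.trans[OF Tm_Sc_Tm_Sc], rule Sc_cong, simp)
  finally show ?thesis .
qed

text \<open>The contractor \<open>c\<^sup>(\<^sup>2\<^sup>i\<^sup>+\<^sup>2\<^sup>)\<close> is \<open>X \<kappa>\<^sub>a \<kappa>\<^sub>b X\<close> with \<open>X\<close> the shifted \<open>c\<^sup>(\<^sup>2\<^sup>i\<^sup>)\<close>, which itself is
  \<open>Z \<kappa>\<^sub>a\<^sub>+\<^sub>1 \<kappa>\<^sub>c Z\<close>; sandwiching by \<open>\<kappa>\<^sub>a\<close> collapses \<open>\<kappa>\<^sub>a \<kappa>\<^sub>a\<^sub>+\<^sub>1 \<kappa>\<^sub>a\<close> to \<open>\<kappa>\<^sub>a\<close>, leaving \<open>Z \<kappa>\<^sub>c Z\<close>.\<close>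
lemma kappa_sandwich_contractor:
  assumes "sandwich ka k2 \<approx> ka" "Tm ka Z \<approx> Tm Z ka" "Tm kc ka \<approx> Tm ka kc"
    and "sandwich Z kc \<approx> Tm (Sc e) Z"
  shows "sandwich ka (Tm (Tm (Tm Z k2) kc) Z) \<approx> Tm (Sc e) (Tm ka Z)"
proof -
  have r2: "prodl [ka, k2, ka] \<approx> prodl [ka]"
    using assms(1) unfolding sandwich_def
    by (rule bmw_eq.trans[OF prodl_three bmw_eq.trans[OF _ bmw_eq.sym[OF prodl_singleton]]])
  have "sandwich ka (Tm (Tm (Tm Z k2) kc) Z) \<approx> Tm (Tm ka (prodl [Z, k2, kc, Z])) (prodl [ka])"
    unfolding sandwich_def
    by (rule bmw_eq.cong_Tm, rule cong_Tm_right, rule bmw_eq.sym, rule prodl_four,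
        rule bmw_eq.sym, rule prodl_singleton)
  also have "\<dots> \<approx> prodl [ka, Z, k2, kc, Z, ka]"
    by (rule bmw_eq.sym) (use prodl_append[of "[ka, Z, k2, kc, Z]" "[ka]"] in simp)
  also have "\<dots> \<approx> prodl [Z, ka, k2, kc, Z, ka]"
    by (rule prodl_swap[OF assms(2), where pre="[]" and post="[k2, kc, Z, ka]"]) simp_all
  also have "\<dots> \<approx> prodl [Z, ka, k2, kc, ka, Z]"
    by (rule prodl_swap[OF bmw_eq.sym[OF assms(2)], where pre="[Z, ka, k2, kc]" and post="[]"]) simp_all
  also have "\<dots> \<approx> prodl [Z, ka, k2, ka, kc, Z]"
    by (rule prodl_swap[OF assms(3), where pre="[Z, ka, k2]" and post="[Z]"]) simp_all
  also have "\<dots> \<approx> prodl [Z, ka, kc, Z]"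
    by (rule prodl_replace[OF r2, where pre="[Z]" and post="[kc, Z]"]) simp_all
  also have "\<dots> \<approx> prodl [ka, Z, kc, Z]"
    by (rule prodl_swap[OF bmw_eq.sym[OF assms(2)], where pre="[]" and post="[kc, Z]"]) simp_all
  also have "\<dots> \<approx> Tm ka (Tm (Sc e) Z)"
    using prodl_three[of Z kc Z] assms(4) unfolding sandwich_def
    by (simp add: cong_Tm_right bmw_eq.trans)
  also have "\<dots> \<approx> Tm (Sc e) (Tm ka Z)" by (rule Tm_Tm_Sc)
  finally show ?thesis .
qed

lemma idempotent_absorbs_left:
  assumes "Tm Z Z \<approx> Z"
  shows "Tm Z (Tm (Tm (Tm Z u) v) w) \<approx> Tm (Tm (Tm Z u) v) w"
proof -
  have "Tm Z (Tm (Tm (Tm Z u) v) w) \<approx> Tm (Tm (Tm (Tm Z Z) u) v) w"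
    by (rule bmw_eq.trans[OF tm_assoc' cong_Tm_left[OF bmw_eq.trans[OF tm_assoc' cong_Tm_left[OF tm_assoc']]]])
  also have "\<dots> \<approx> Tm (Tm (Tm Z u) v) w"
    by (rule cong_Tm_left, rule cong_Tm_left, rule cong_Tm_left, rule assms)
  finally show ?thesis .
qed

lemma sandwich_idempotent_commuting:
  assumes "Tm X X \<approx> X" "Tm X y \<approx> Tm y X"
  shows "sandwich (Tm (Tm (Tm X u) v) X) y \<approx> prodl [X, u, v, y, X, u, v, X]"
proof -
  have "sandwich (Tm (Tm (Tm X u) v) X) y \<approx> prodl [X, u, v, X, y, X, u, v, X]"
    using sandwich_prodl[OF bmw_eq.sym[OF prodl_four]] by simp
  also have "\<dots> \<approx> prodl [X, u, v, y, X, X, u, v, X]"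
    by (rule prodl_swap[OF assms(2), where pre="[X, u, v]" and post="[X, u, v, X]"]) simp_all
  also have "\<dots> \<approx> prodl [X, u, v, y, X, u, v, X]"
    by (rule prodl_replace[OF prodl_merge[OF assms(1)], where pre="[X, u, v, y]" and post="[u, v, X]"]) simp_all
  finally show ?thesis .
qed

text \<open>With \<open>C = X \<kappa>\<^sub>a \<kappa>\<^sub>b X\<close>, moving \<open>\<kappa>\<^sub>a\<close> next to \<open>X\<close> gives
  \<open>C y C = X \<kappa>\<^sub>b y (\<kappa>\<^sub>a X \<kappa>\<^sub>a) \<kappa>\<^sub>b X = e X \<kappa>\<^sub>a Z (\<kappa>\<^sub>b y \<kappa>\<^sub>b) X = e a X \<kappa>\<^sub>a \<kappa>\<^sub>b Z X = e a C\<close>.\<close>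
lemma sandwich_step:
  assumes ka_X: "sandwich ka X \<approx> Tm (Sc e) (Tm ka Z)"
    and Z_X: "Tm Z X \<approx> X" and kb_y: "sandwich kb y \<approx> Tm (Sc a) kb"
    and ka_kb: "Tm ka kb \<approx> Tm kb ka" and ka_y: "Tm ka y \<approx> Tm y ka"
    and Z_y: "Tm Z y \<approx> Tm y Z" and Z_kb: "Tm Z kb \<approx> Tm kb Z"
  shows "prodl [X, ka, kb, y, X, ka, kb, X] \<approx> Tm (Sc (e * a)) (Tm (Tm (Tm X ka) kb) X)"
proof -
  have "prodl [ka, X, ka] \<approx> Tm (Sc e) (prodl [ka, Z])"
    using ka_X unfolding sandwich_def
    by (rule bmw_eq.trans[OF prodl_three bmw_eq.trans[OF _ cong_Tm_right[OF bmw_eq.sym[OF prodl_two]]]])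
  then have ka_X': "prodl [ka, X, ka] \<approx> prodl [Sc e, ka, Z]" by simp
  have "prodl [kb, y, kb] \<approx> Tm (Sc a) (prodl [kb])"
    using kb_y unfolding sandwich_def
    by (rule bmw_eq.trans[OF prodl_three bmw_eq.trans[OF _ cong_Tm_right[OF bmw_eq.sym[OF prodl_singleton]]]])
  then have kb_y': "prodl [kb, y, kb] \<approx> prodl [Sc a, kb]" by simp
  have "prodl [X, ka, kb, y, X, ka, kb, X] \<approx> prodl [X, kb, y, ka, X, ka, kb, X]"
    by (rule bmw_eq.trans[OF prodl_swap[OF ka_kb, where pre="[X]" and post="[y, X, ka, kb, X]"]
          prodl_swap[OF ka_y, where pre="[X, kb]" and post="[X, ka, kb, X]"]]) simp_all
  also have "\<dots> \<approx> prodl [X, kb, y, Sc e, ka, Z, kb, X]"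
    by (rule prodl_replace[OF ka_X', where pre="[X, kb, y]" and post="[kb, X]"]) simp_all
  also have "\<dots> \<approx> Tm (Sc e) (prodl [X, kb, y, ka, Z, kb, X])"
    by (rule prodl_Sc[where pre="[X, kb, y]" and post="[ka, Z, kb, X]"]) simp_all
  finally have left: "prodl [X, ka, kb, y, X, ka, kb, X] \<approx> Tm (Sc e) (prodl [X, kb, y, ka, Z, kb, X])" .
  have "prodl [X, kb, y, ka, Z, kb, X] \<approx> prodl [X, ka, kb, y, Z, kb, X]"
    by (rule bmw_eq.trans[OF prodl_swap[OF bmw_eq.sym[OF ka_y], where pre="[X, kb]" and post="[Z, kb, X]"]
          prodl_swap[OF bmw_eq.sym[OF ka_kb], where pre="[X]" and post="[y, Z, kb, X]"]]) simp_all
  also have "\<dots> \<approx> prodl [X, ka, Z, kb, y, kb, X]"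
    by (rule bmw_eq.trans[OF prodl_swap[OF bmw_eq.sym[OF Z_y], where pre="[X, ka, kb]" and post="[kb, X]"]
          prodl_swap[OF bmw_eq.sym[OF Z_kb], where pre="[X, ka]" and post="[y, kb, X]"]]) simp_all
  also have "\<dots> \<approx> prodl [X, ka, Z, Sc a, kb, X]"
    by (rule prodl_replace[OF kb_y', where pre="[X, ka, Z]" and post="[X]"]) simp_all
  also have "\<dots> \<approx> Tm (Sc a) (prodl [X, ka, Z, kb, X])"
    by (rule prodl_Sc[where pre="[X, ka, Z]" and post="[kb, X]"]) simp_all
  finally have middle: "prodl [X, kb, y, ka, Z, kb, X] \<approx> Tm (Sc a) (prodl [X, ka, Z, kb, X])" .
  have "prodl [X, ka, Z, kb, X] \<approx> prodl [X, ka, kb, Z, X]"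
    by (rule prodl_swap[OF Z_kb, where pre="[X, ka]" and post="[X]"]) simp_all
  also have "\<dots> \<approx> prodl [X, ka, kb, X]"
    by (rule prodl_replace[OF prodl_merge[OF Z_X], where pre="[X, ka, kb]" and post="[]"]) simp_all
  also have "\<dots> \<approx> Tm (Tm (Tm X ka) kb) X" by (rule prodl_four)
  finally have right: "prodl [X, ka, Z, kb, X] \<approx> Tm (Tm (Tm X ka) kb) X" .
  from left middle right show ?thesis
    by (meson bmw_eq.trans cong_Tm_right Tm_Sc_Tm_Sc)
qed

definition kappa_like :: "bexpr \<Rightarrow> nat \<Rightarrow> bool" where
  "kappa_like C j \<longleftrightarrow> (\<forall>y a. supported_in {j + 1} y \<longrightarrow>
      sandwich (bkappa q \<mu> j) y \<approx> Tm (Sc a) (bkappa q \<mu> j) \<longrightarrow>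
      sandwich C y \<approx> Tm (Sc (a / beta q \<mu>)) C)"

lemma kappa_like_bcontr_one: "kappa_like (bshift k (bcontr q \<mu> 1)) (k + 1)"
  unfolding kappa_like_def using sandwich_scaled[of "bkappa q \<mu> (Suc k)" _ _ "1 / beta q \<mu>"] by simp

context
  assumes q: "q \<noteq> 0" "q \<noteq> 1" "q \<noteq> -1" and mu: "\<mu> \<noteq> 0" and beta: "beta q \<mu> \<noteq> 0"
begin

lemma kappa_like_relations:
  assumes C: "kappa_like C j" and j: "1 \<le> j" "j + 1 < m"
  shows "Tm C C \<approx> C"
    and "sandwich C (Sg (j+1)) \<approx> Tm (Sc (1 / (beta q \<mu> * \<mu>))) C"
    and "sandwich C (bkappa q \<mu> (j+1)) \<approx> Tm (Sc (1 / beta q \<mu>)) C"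
proof -
  note sw = C[unfolded kappa_like_def, rule_format]
  let ?k = "bkappa q \<mu> j"
  have "sandwich ?k (Sc 1) \<approx> Tm (Sc (1 * beta q \<mu>)) ?k"
    by (rule sandwich_Sc_eigen, rule kappa_square) (use j in simp_all)
  then have "sandwich C (Sc 1) \<approx> Tm (Sc (1 * beta q \<mu> / beta q \<mu>)) C" by (intro sw) simp_all
  then have "Tm (Tm C (Sc 1)) C \<approx> C"
    using beta by (simp add: sandwich_def bmw_eq.trans[OF _ bmw_eq.tm_one_l])
  then show "Tm C C \<approx> C" by (rule bmw_eq.trans[OF cong_Tm_left[OF bmw_eq.sym[OF bmw_eq.tm_one_r]]])
  have "sandwich C (Sg (j+1)) \<approx> Tm (Sc ((1/\<mu>) / beta q \<mu>)) C"
    by (rule sw, simp, unfold sandwich_def, rule bmw_eq.ksk_pos[OF j])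
  then show "sandwich C (Sg (j+1)) \<approx> Tm (Sc (1 / (beta q \<mu> * \<mu>))) C" by (simp add: mult.commute)
  have "sandwich C (bkappa q \<mu> (j+1)) \<approx> Tm (Sc (1 / beta q \<mu>)) C"
    by (rule sw, simp, rule bmw_eq.trans[OF kappa_kappa_kappa[OF q mu j]],
        rule bmw_eq.sym, rule bmw_eq.tm_one_l)
  then show "sandwich C (bkappa q \<mu> (j+1)) \<approx> Tm (Sc (1 / beta q \<mu>)) C" .
qed

lemma kappa_sandwich_shifted_bcontr:
  assumes m: "2 * p + k + 5 \<le> m"
    and Z_kappa_like: "p \<noteq> 0 \<Longrightarrow> kappa_like (bshift (k + 2) (bcontr q \<mu> p)) (2 * p + k + 1)"
  defines "X \<equiv> bshift (k + 1) (bcontr q \<mu> (Suc p))" and "Z \<equiv> bshift (k + 2) (bcontr q \<mu> p)"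
  shows "sandwich (bkappa q \<mu> (k + 1)) X \<approx> Tm (Sc (1 / beta q \<mu>)) (Tm (bkappa q \<mu> (k + 1)) Z)"
    and "Tm Z X \<approx> X"
proof -
  let ?ka = "bkappa q \<mu> (k + 1)"
  have ka_k2: "sandwich ?ka (bkappa q \<mu> (k + 2)) \<approx> ?ka"
    using kappa_kappa_kappa[OF q mu, of "k + 1"] m by simp
  have "sandwich ?ka X \<approx> Tm (Sc (1 / beta q \<mu>)) (Tm ?ka Z) \<and> Tm Z X \<approx> X"
  proof (cases p)
    case 0
    then have X: "X = Tm (Sc (1 / beta q \<mu>)) (bkappa q \<mu> (k + 2))" and Z: "Z = Sc 1"
      unfolding X_def Z_def by simp_all
    have "sandwich ?ka X \<approx> Tm (Sc (1 / beta q \<mu>)) ?ka"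
      unfolding X by (rule bmw_eq.trans[OF sandwich_Tm_Sc cong_Tm_right[OF ka_k2]])
    then show ?thesis
      unfolding Z
      by (intro conjI bmw_eq.tm_one_l bmw_eq.trans[OF _ cong_Tm_right[OF bmw_eq.sym[OF bmw_eq.tm_one_r]]])
  next
    case (Suc p')
    define kc where "kc = bkappa q \<mu> (2 * p + k + 2)"
    have X: "X = Tm (Tm (Tm Z (bkappa q \<mu> (k + 2))) kc) Z"
      unfolding X_def Z_def kc_def Suc by (simp add: eval_nat_numeral)
    have supp_Z: "supported_in {k + 3..<2 * p + k + 2} Z"
      using supported_in_shifted_bcontr[of "k + 2" p q \<mu>] unfolding Z_def by (simp add: eval_nat_numeral)
    have "kappa_like Z (2 * p + k + 1)" using Z_kappa_like Suc unfolding Z_def by simp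
    note Z_rel = kappa_like_relations[OF this]
    have "Tm ?ka Z \<approx> Tm Z ?ka"
      by (rule commute_far_apart[OF supp_Z]) (use m in \<open>auto simp: far_apart_def\<close>)
    moreover have "Tm kc ?ka \<approx> Tm ?ka kc"
      by (rule commute_far_apart[of "{k + 1}"]) (use m Suc in \<open>auto simp: far_apart_def kc_def\<close>)
    moreover have "sandwich Z kc \<approx> Tm (Sc (1 / beta q \<mu>)) Z"
      using Z_rel(3) m Suc by (simp add: kc_def)
    moreover have "Tm Z Z \<approx> Z" by (rule Z_rel(1)) (use m Suc in simp_all)
    ultimately show ?thesis
      unfolding X by (meson kappa_sandwich_contractor[OF ka_k2] idempotent_absorbs_left)
  qed
  then show "sandwich ?ka X \<approx> Tm (Sc (1 / beta q \<mu>)) (Tm ?ka Z)" and "Tm Z X \<approx> X" by simp_all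
qed

lemma kappa_like_bcontr_Suc_Suc:
  assumes m: "2 * p + k + 5 \<le> m"
    and X_kappa_like: "kappa_like (bshift (k + 1) (bcontr q \<mu> (Suc p))) (2 * p + k + 2)"
    and Z_kappa_like: "p \<noteq> 0 \<Longrightarrow> kappa_like (bshift (k + 2) (bcontr q \<mu> p)) (2 * p + k + 1)"
  shows "kappa_like (bshift k (bcontr q \<mu> (Suc (Suc p)))) (2 * p + k + 3)"
  unfolding kappa_like_def
proof (intro allI impI)
  fix y a
  assume supp_y: "supported_in {2 * p + k + 3 + 1} y"
    and kb_y: "sandwich (bkappa q \<mu> (2 * p + k + 3)) y \<approx> Tm (Sc a) (bkappa q \<mu> (2 * p + k + 3))"
  define X where "X = bshift (k + 1) (bcontr q \<mu> (Suc p))"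
  define Z where "Z = bshift (k + 2) (bcontr q \<mu> p)"
  let ?ka = "bkappa q \<mu> (k + 1)" and ?kb = "bkappa q \<mu> (2 * p + k + 3)"
  have C: "bshift k (bcontr q \<mu> (Suc (Suc p))) = Tm (Tm (Tm X ?ka) ?kb) X"
    unfolding X_def by (simp add: eval_nat_numeral)
  have supp_X: "supported_in {k + 2..<2 * p + k + 3} X"
    using supported_in_shifted_bcontr[of "k + 1" "Suc p" q \<mu>] unfolding X_def by (simp add: eval_nat_numeral)
  have supp_Z: "supported_in {k + 3..<2 * p + k + 2} Z"
    using supported_in_shifted_bcontr[of "k + 2" p q \<mu>] unfolding Z_def by (simp add: eval_nat_numeral)
  have "Tm X X \<approx> X" by (rule kappa_like_relations(1)[OF X_kappa_like[folded X_def]]) (use m in simp_all)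
  moreover have "Tm X y \<approx> Tm y X"
    by (rule commute_far_apart[OF supp_y supp_X]) (use m in \<open>auto simp: far_apart_def\<close>)
  moreover note kappa_sandwich_shifted_bcontr[OF m Z_kappa_like, folded X_def Z_def]
  moreover have "Tm ?ka y \<approx> Tm y ?ka"
    by (rule commute_far_apart[OF supp_y, of "{k + 1}"]) (use m in \<open>auto simp: far_apart_def\<close>)
  moreover have "Tm Z y \<approx> Tm y Z"
    by (rule commute_far_apart[OF supp_y supp_Z]) (use m in \<open>auto simp: far_apart_def\<close>)
  moreover have "Tm ?ka ?kb \<approx> Tm ?kb ?ka"
    by (rule commute_far_apart[of "{2 * p + k + 3}" _ "{k + 1}"]) (use m in \<open>auto simp: far_apart_def\<close>)
  moreover have "Tm Z ?kb \<approx> Tm ?kb Z"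
    by (rule commute_far_apart[OF _ supp_Z, of "{2 * p + k + 3}"]) (use m in \<open>auto simp: far_apart_def\<close>)
  ultimately have "sandwich (Tm (Tm (Tm X ?ka) ?kb) X) y \<approx> Tm (Sc (1 / beta q \<mu> * a)) (Tm (Tm (Tm X ?ka) ?kb) X)"
    by (meson bmw_eq.trans sandwich_idempotent_commuting sandwich_step kb_y)
  then show "sandwich (bshift k (bcontr q \<mu> (Suc (Suc p)))) y
      \<approx> Tm (Sc (a / beta q \<mu>)) (bshift k (bcontr q \<mu> (Suc (Suc p))))"
    unfolding C by simp
qed

lemma kappa_like_bcontr:
  "2 * n + k + 3 \<le> m \<Longrightarrow> kappa_like (bshift k (bcontr q \<mu> (Suc n))) (2 * n + k + 1)"
proof (induction n arbitrary: k rule: less_induct)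
  case (less n)
  show ?case
  proof (cases n)
    case 0
    then show ?thesis using kappa_like_bcontr_one[of k] by simp
  next
    case (Suc p)
    have "kappa_like (bshift k (bcontr q \<mu> (Suc (Suc p)))) (2 * p + k + 3)"
    proof (rule kappa_like_bcontr_Suc_Suc)
      show "2 * p + k + 5 \<le> m" using less.prems Suc by simp
      show "kappa_like (bshift (k + 1) (bcontr q \<mu> (Suc p))) (2 * p + k + 2)"
        using less.IH[of p "k + 1"] less.prems Suc by simp
      show "kappa_like (bshift (k + 2) (bcontr q \<mu> p)) (2 * p + k + 1)" if "p \<noteq> 0"
      proof -
        obtain p' where "p = Suc p'" using \<open>p \<noteq> 0\<close> not0_implies_Suc by blast
        then show ?thesis using less.IH[of p' "k + 2"] less.prems Suc by simp
      qed
    qed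
    then show ?thesis using Suc by (simp add: eval_nat_numeral)
  qed
qed

end

end

theorem lemmaA2:
  fixes q \<mu> :: complex and i m :: nat
  assumes "q \<noteq> 0" "q \<noteq> 1" "q \<noteq> -1"
    and "\<mu> \<noteq> 0" "\<mu> \<noteq> q" "\<mu> \<noteq> - (1/q)"
    and "1 \<le> i" "2 * i + 1 \<le> m"
  shows "bmw_eq q \<mu> m (Tm (Tm (bcontr q \<mu> i) (Sg (2*i))) (bcontr q \<mu> i))
           (Tm (Sc (1 / (beta q \<mu> * \<mu>))) (bcontr q \<mu> i))
       \<and> bmw_eq q \<mu> m (Tm (Tm (bcontr q \<mu> i) (bkappa q \<mu> (2*i))) (bcontr q \<mu> i))
           (Tm (Sc (1 / beta q \<mu>)) (bcontr q \<mu> i))"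
proof -
  obtain n where i: "i = Suc n" using \<open>1 \<le> i\<close> by (cases i) auto
  have beta: "beta q \<mu> \<noteq> 0" by (rule beta_nonzero) (use assms in simp_all)
  have "kappa_like q \<mu> m (bcontr q \<mu> i) (2 * n + 1)"
    using kappa_like_bcontr[OF assms(1-4) beta, of n 0] assms(8) i by simp
  from kappa_like_relations(2,3)[OF assms(1-4) beta this] show ?thesis
    using assms(8) i by (simp add: sandwich_def)
qed

end
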